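(* Let $\mathcal{I}$ be an instance of vertex cover and let $\mathcal{T}_S(\mathcal{I})$ be a branch-and-bound tree generated by strong-branching (product score). Let $N$ be any internal node of $\mathcal{T}_S(\mathcal{I})$ and let $N'$ be a child of $N$ resulting from branching on $x_v$ where $v\notin I(\mathcal{I},N)$. Then $I(\mathcal{I},N)\subset I(\mathcal{I},N')$.
   Context: Vertex cover IP for a graph $G=(V,E)$: minimize $\sum_v x_v$ subject to $x_u+x_v\ge1$ ($uv\in E$), $x\in\{0,1\}^V$; LP relaxation uses $x\in[0,1]^V$. In a branch-and-bound tree each node $N$ is the LP relaxation plus constraints $x_j=0$ or $x_j=1$ for variables fixed on the path from the root, and branching on $x_v$ at $N$ produces the children obtained by adding $x_v=0$ and $x_v=1$. Strong branching with product score: at node $N$ with LP value $z$ and returned optimal solution $\hat x$, for each $j$ with $\hat x_j$ fractional compute the children's optimal LP values $z^0_j,z^1_j$ ($+\infty$ if infeasible), $\Delta^-_j=z^0_j-z$, $\Delta^+_j=z^1_j-z$, and branch on a maximizer of $\Delta^+_j\Delta^-_j$ (convention $0\cdot\infty=0$). $I(\mathcal{I},N)$ denotes the union, over all optimal solutions $x$ of the LP at node $N$, of $\{j: x_j\in\{0,1\}\}$. *)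

theory Defs
  imports Complex_Main "HOL-Library.Extended_Real"
begin

text \<open>A vertex cover instance is a finite simple graph with vertex set V and edge set E
  (ordered pairs; E is irreflexive and contained in V \<times> V).
  A branch-and-bound node is given by the pair (Z, W) of the sets of variables
  fixed to 0 and to 1 on the path from the root.\<close>

definition vc_feas :: "'a set \<Rightarrow> ('a \<times> 'a) set \<Rightarrow> 'a set \<Rightarrow> 'a set \<Rightarrow> ('a \<Rightarrow> real) set" where
  "vc_feas V E Z W = {x. (\<forall>v\<in>V. 0 \<le> x v \<and> x v \<le> 1)
                       \<and> (\<forall>(u, v)\<in>E. x u + x v \<ge> 1)
                       \<and> (\<forall>j\<in>Z. x j = 0) \<and> (\<forall>j\<in>W. x j = 1)}"

text \<open>Optimal LP value of the node (\<open>\<infinity>\<close> if infeasible).\<close>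
definition vc_lp_val :: "'a set \<Rightarrow> ('a \<times> 'a) set \<Rightarrow> 'a set \<Rightarrow> 'a set \<Rightarrow> ereal" where
  "vc_lp_val V E Z W = (INF x\<in>vc_feas V E Z W. ereal (\<Sum>v\<in>V. x v))"

definition vc_opt :: "'a set \<Rightarrow> ('a \<times> 'a) set \<Rightarrow> 'a set \<Rightarrow> 'a set \<Rightarrow> ('a \<Rightarrow> real) \<Rightarrow> bool" where
  "vc_opt V E Z W x \<longleftrightarrow> x \<in> vc_feas V E Z W \<and> ereal (\<Sum>v\<in>V. x v) = vc_lp_val V E Z W"

definition vc_I :: "'a set \<Rightarrow> ('a \<times> 'a) set \<Rightarrow> 'a set \<Rightarrow> 'a set \<Rightarrow> 'a set" where
  "vc_I V E Z W = {j\<in>V. \<exists>x. vc_opt V E Z W x \<and> (x j = 0 \<or> x j = 1)}"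

text \<open>Strong branching product score (in ereal, where 0 * \<infinity> = 0).\<close>
definition sb_score :: "'a set \<Rightarrow> ('a \<times> 'a) set \<Rightarrow> 'a set \<Rightarrow> 'a set \<Rightarrow> 'a \<Rightarrow> ereal" where
  "sb_score V E Z W j =
     (vc_lp_val V E Z (insert j W) - vc_lp_val V E Z W) *
     (vc_lp_val V E (insert j Z) W - vc_lp_val V E Z W)"

definition sb_branch :: "'a set \<Rightarrow> ('a \<times> 'a) set \<Rightarrow> 'a set \<Rightarrow> 'a set \<Rightarrow> ('a \<Rightarrow> real) \<Rightarrow> 'a \<Rightarrow> bool" where
  "sb_branch V E Z W xh j \<longleftrightarrow>
     vc_opt V E Z W xh \<and> j \<in> V \<and> 0 < xh j \<and> xh j < 1 \<and>
     (\<forall>k\<in>V. 0 < xh k \<and> xh k < 1 \<longrightarrow> sb_score V E Z W k \<le> sb_score V E Z W j)"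

inductive sb_node :: "'a set \<Rightarrow> ('a \<times> 'a) set \<Rightarrow> 'a set \<times> 'a set \<Rightarrow> bool"
  for V :: "'a set" and E :: "('a \<times> 'a) set" where
  root: "sb_node V E ({}, {})"
| child0: "sb_node V E (Z, W) \<Longrightarrow> sb_branch V E Z W xh j \<Longrightarrow> sb_node V E (insert j Z, W)"
| child1: "sb_node V E (Z, W) \<Longrightarrow> sb_branch V E Z W xh j \<Longrightarrow> sb_node V E (Z, insert j W)"

end

theory Submission
  imports Defs "HOL-Library.FuncSet"
begin

text \<open>
  The vertex cover LP is half-integral: shifting all coordinates outside \<open>{0, 1/2, 1}\<close>
  simultaneously towards or away from \<open>1/2\<close> keeps feasibility, and one of the two directions
  does not increase the cost, so every feasible point can be rounded to a half-integral one
  without changing its half-integral coordinates.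
  Now let \<open>x\<close> be optimal at \<open>N\<close> with \<open>x j\<close> integral and \<open>y\<close> optimal at the child
  \<open>N'\<close>, both half-integral; as \<open>v \<notin> I(N)\<close>, \<open>x v = 1/2\<close>. The average \<open>(x + y)/2\<close> is
  quarter-integral, and rounding it towards \<open>1/2\<close> resp. away from \<open>1/2\<close> splits \<open>x + y\<close>
  into a point feasible at \<open>N\<close> and a point feasible at \<open>N'\<close>. The first costs at least as
  much as \<open>x\<close>, so the second is optimal at \<open>N'\<close>; if \<open>y j = 1/2\<close>, its \<open>j\<close>-th
  coordinate is integral.
\<close>

definition half_integral :: "real \<Rightarrow> bool" where
  "half_integral r \<longleftrightarrow> r \<in> {0, 1/2, 1}"

lemma vc_feasI:
  assumes "\<And>i. i \<in> V \<Longrightarrow> 0 \<le> x i" "\<And>i. i \<in> V \<Longrightarrow> x i \<le> 1"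
    and "\<And>u w. (u, w) \<in> E \<Longrightarrow> 1 \<le> x u + x w"
    and "\<And>j. j \<in> Z \<Longrightarrow> x j = 0" "\<And>j. j \<in> W \<Longrightarrow> x j = 1"
  shows "x \<in> vc_feas V E Z W"
  using assms unfolding vc_feas_def by auto

lemma vc_feasD:
  assumes "x \<in> vc_feas V E Z W"
  shows "\<And>i. i \<in> V \<Longrightarrow> 0 \<le> x i" "\<And>i. i \<in> V \<Longrightarrow> x i \<le> 1"
    and "\<And>u w. (u, w) \<in> E \<Longrightarrow> 1 \<le> x u + x w"
    and "\<And>j. j \<in> Z \<Longrightarrow> x j = 0" "\<And>j. j \<in> W \<Longrightarrow> x j = 1"
  using assms unfolding vc_feas_def by auto

lemma vc_feas_antimono: "Z \<subseteq> Z' \<Longrightarrow> W \<subseteq> W' \<Longrightarrow> vc_feas V E Z' W' \<subseteq> vc_feas V E Z W"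
  unfolding vc_feas_def by blast

lemma vc_opt_iff:
  "vc_opt V E Z W y \<longleftrightarrow> y \<in> vc_feas V E Z W \<and> (\<forall>x\<in>vc_feas V E Z W. (\<Sum>i\<in>V. y i) \<le> (\<Sum>i\<in>V. x i))"
proof
  assume "vc_opt V E Z W y"
  then have y: "y \<in> vc_feas V E Z W" and val: "ereal (\<Sum>i\<in>V. y i) = vc_lp_val V E Z W"
    unfolding vc_opt_def by auto
  have "ereal (\<Sum>i\<in>V. y i) \<le> ereal (\<Sum>i\<in>V. x i)" if "x \<in> vc_feas V E Z W" for x
    unfolding val vc_lp_val_def using that by (rule INF_lower)
  with y show "y \<in> vc_feas V E Z W \<and> (\<forall>x\<in>vc_feas V E Z W. (\<Sum>i\<in>V. y i) \<le> (\<Sum>i\<in>V. x i))"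
    by simp
next
  assume y: "y \<in> vc_feas V E Z W \<and> (\<forall>x\<in>vc_feas V E Z W. (\<Sum>i\<in>V. y i) \<le> (\<Sum>i\<in>V. x i))"
  then have "vc_lp_val V E Z W = ereal (\<Sum>i\<in>V. y i)"
    unfolding vc_lp_val_def by (intro antisym INF_lower INF_greatest) auto
  with y show "vc_opt V E Z W y" unfolding vc_opt_def by simp
qed

subsection \<open>Half-integrality of the LP\<close>

text \<open>
  A coordinate \<open>r\<close> that is not half-integral moves by \<open>\<epsilon> * half_direction r\<close>, i.e. its distance
  \<open>\<bar>r - 1/2\<bar>\<close> to \<open>1/2\<close> becomes \<open>\<bar>r - 1/2\<bar> + \<epsilon>\<close>; the shift is admissible if this stays in
  \<open>[0, 1/2]\<close>.
\<close>

definition half_direction :: "real \<Rightarrow> real" where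
  "half_direction r = (if half_integral r then 0 else if r < 1/2 then -1 else 1)"

definition shift_admissible :: "real \<Rightarrow> real \<Rightarrow> bool" where
  "shift_admissible \<epsilon> r \<longleftrightarrow> half_integral r \<or> (0 \<le> \<bar>r - 1/2\<bar> + \<epsilon> \<and> \<bar>r - 1/2\<bar> + \<epsilon> \<le> 1/2)"

lemma half_direction_half_integral: "half_integral r \<Longrightarrow> half_direction r = 0"
  unfolding half_direction_def by simp

lemma half_shift_bounds:
  assumes "0 \<le> a" "a \<le> 1" "shift_admissible \<epsilon> a"
  shows "0 \<le> a + \<epsilon> * half_direction a" "a + \<epsilon> * half_direction a \<le> 1"
  using assms unfolding half_direction_def shift_admissible_def half_integral_def
  by (cases "a < 1/2"; auto)+

text \<open>On an edge with \<open>a + b = 1\<close> and both ends not half-integral the two shifts cancel.\<close>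

lemma half_shift_cover:
  assumes "0 \<le> a" "a \<le> 1" "0 \<le> b" "b \<le> 1" "1 \<le> a + b"
    and "shift_admissible \<epsilon> a" "shift_admissible \<epsilon> b"
  shows "1 \<le> (a + \<epsilon> * half_direction a) + (b + \<epsilon> * half_direction b)"
  using assms unfolding half_direction_def shift_admissible_def half_integral_def
  by (cases "a < 1/2"; cases "b < 1/2") auto

lemma vc_feas_half_shift:
  assumes E: "E \<subseteq> V \<times> V" and x: "x \<in> vc_feas V E Z W"
    and adm: "\<And>i. i \<in> V \<Longrightarrow> shift_admissible \<epsilon> (x i)"
  shows "(\<lambda>i. x i + \<epsilon> * half_direction (x i)) \<in> vc_feas V E Z W"
proof (rule vc_feasI)
  fix i assume "i \<in> V"
  then show "0 \<le> x i + \<epsilon> * half_direction (x i)" "x i + \<epsilon> * half_direction (x i) \<le> 1"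
    using half_shift_bounds vc_feasD(1,2)[OF x] adm by blast+
next
  fix u w assume "(u, w) \<in> E"
  with E have "u \<in> V" "w \<in> V" by auto
  with \<open>(u, w) \<in> E\<close> show "1 \<le> x u + \<epsilon> * half_direction (x u) + (x w + \<epsilon> * half_direction (x w))"
    using half_shift_cover vc_feasD(1,2,3)[OF x] adm by blast
qed (use vc_feasD(4,5)[OF x] half_direction_half_integral in \<open>auto simp: half_integral_def\<close>)

text \<open>
  Moving towards \<open>1/2\<close> until the closest coordinate reaches it, or away from it until the
  farthest one reaches \<open>0\<close> or \<open>1\<close>; the sign of the total direction decides which one
  does not increase the cost.
\<close>

lemma half_shift_step:
  fixes x :: "'a \<Rightarrow> real"
  assumes fin: "finite V" and bounds: "\<And>i. i \<in> V \<Longrightarrow> 0 \<le> x i \<and> x i \<le> 1"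
    and bad: "i1 \<in> V" "\<not> half_integral (x i1)"
  obtains \<epsilon> i0 where "\<And>i. i \<in> V \<Longrightarrow> shift_admissible \<epsilon> (x i)"
    and "\<epsilon> * (\<Sum>i\<in>V. half_direction (x i)) \<le> 0"
    and "i0 \<in> V" "\<not> half_integral (x i0)" "half_integral (x i0 + \<epsilon> * half_direction (x i0))"
proof -
  define D where "D = {i\<in>V. \<not> half_integral (x i)}"
  define h where "h i = \<bar>x i - 1/2\<bar>" for i
  have finD: "finite D" and "D \<noteq> {}" using fin bad unfolding D_def by auto
  have h: "0 < h i" "h i < 1/2" if "i \<in> D" for i
    using that bounds[of i] unfolding D_def h_def half_integral_def by (auto simp: abs_if)
  have shifted: "x i + \<epsilon> * half_direction (x i) = 1/2 + (if x i < 1/2 then - 1 else 1) * (h i + \<epsilon>)"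
    if "i \<in> D" for i \<epsilon>
    using that unfolding D_def h_def half_direction_def by auto
  show thesis
  proof (cases "0 \<le> (\<Sum>i\<in>V. half_direction (x i))")
    case True
    have "Min (h ` D) \<in> h ` D" using finD \<open>D \<noteq> {}\<close> by simp
    then obtain i0 where i0: "i0 \<in> D" "h i0 = Min (h ` D)" by (metis imageE)
    have "Min (h ` D) \<le> h i" if "i \<in> D" for i using finD that by simp
    then have "shift_admissible (- h i0) (x i)" if "i \<in> V" for i
      using that h i0 unfolding shift_admissible_def D_def h_def by force
    moreover have "half_integral (x i0 + - h i0 * half_direction (x i0))"
      unfolding shifted[OF i0(1)] half_integral_def by simp
    ultimately show thesis
      using that[of "- h i0" i0] True h[OF i0(1)] i0(1) unfolding D_def
      by (simp add: mult_nonpos_nonneg)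
  next
    case False
    have "Max (h ` D) \<in> h ` D" using finD \<open>D \<noteq> {}\<close> by simp
    then obtain i0 where i0: "i0 \<in> D" "h i0 = Max (h ` D)" by (metis imageE)
    have "h i \<le> Max (h ` D)" if "i \<in> D" for i using finD that by simp
    then have "shift_admissible (1/2 - h i0) (x i)" if "i \<in> V" for i
      using that h i0 unfolding shift_admissible_def D_def h_def by force
    moreover have "half_integral (x i0 + (1/2 - h i0) * half_direction (x i0))"
      unfolding shifted[OF i0(1)] half_integral_def by simp
    ultimately show thesis
      using that[of "1/2 - h i0" i0] False h[OF i0(1)] i0(1) unfolding D_def
      by (simp add: mult_nonneg_nonpos)
  qed
qed

lemma vc_feas_round_half_integral:
  assumes fin: "finite V" and E: "E \<subseteq> V \<times> V" and x: "x \<in> vc_feas V E Z W"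
  shows "\<exists>x'. x' \<in> vc_feas V E Z W \<and> (\<forall>i\<in>V. half_integral (x' i))
    \<and> (\<Sum>i\<in>V. x' i) \<le> (\<Sum>i\<in>V. x i) \<and> (\<forall>i\<in>V. half_integral (x i) \<longrightarrow> x' i = x i)"
  using x
proof (induction "card {i\<in>V. \<not> half_integral (x i)}" arbitrary: x rule: less_induct)
  case less
  show ?case
  proof (cases "\<forall>i\<in>V. half_integral (x i)")
    case True
    then show ?thesis using less.prems by blast
  next
    case False
    then obtain i1 where "i1 \<in> V" "\<not> half_integral (x i1)" by blast
    moreover have "0 \<le> x i \<and> x i \<le> 1" if "i \<in> V" for i
      using vc_feasD(1,2)[OF less.prems that] by blast
    ultimately obtain \<epsilon> i0 where adm: "\<And>i. i \<in> V \<Longrightarrow> shift_admissible \<epsilon> (x i)"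
      and descent: "\<epsilon> * (\<Sum>i\<in>V. half_direction (x i)) \<le> 0"
      and i0: "i0 \<in> V" "\<not> half_integral (x i0)" "half_integral (x i0 + \<epsilon> * half_direction (x i0))"
      using half_shift_step[OF fin] by metis
    define y where "y i = x i + \<epsilon> * half_direction (x i)" for i
    have y: "y \<in> vc_feas V E Z W"
      unfolding y_def using vc_feas_half_shift[OF E less.prems adm] .
    have "(\<Sum>i\<in>V. y i) = (\<Sum>i\<in>V. x i) + \<epsilon> * (\<Sum>i\<in>V. half_direction (x i))"
      unfolding y_def by (simp add: sum.distrib sum_distrib_left)
    with descent have cost: "(\<Sum>i\<in>V. y i) \<le> (\<Sum>i\<in>V. x i)" by linarith
    have keep: "y i = x i" if "half_integral (x i)" for i
      using that half_direction_half_integral unfolding y_def by simp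
    have "half_integral (y i0)" using i0(3) unfolding y_def .
    then have "{i\<in>V. \<not> half_integral (y i)} \<subseteq> {i\<in>V. \<not> half_integral (x i)} - {i0}"
      using keep by auto
    then have "card {i\<in>V. \<not> half_integral (y i)} < card {i\<in>V. \<not> half_integral (x i)}"
      using fin i0(1,2) by (intro psubset_card_mono) auto
    from less.hyps[OF this y] obtain x' where x': "x' \<in> vc_feas V E Z W" "\<forall>i\<in>V. half_integral (x' i)"
      "(\<Sum>i\<in>V. x' i) \<le> (\<Sum>i\<in>V. y i)" "\<forall>i\<in>V. half_integral (y i) \<longrightarrow> x' i = y i"
      by blast
    show ?thesis
      using x' cost keep by (intro exI[of _ x']) auto
  qed
qed

lemma vc_opt_half_integral_exists:
  assumes fin: "finite V" and E: "E \<subseteq> V \<times> V" and feas: "vc_feas V E Z W \<noteq> {}"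
  shows "\<exists>y. vc_opt V E Z W y \<and> (\<forall>i\<in>V. half_integral (y i))"
proof -
  define H where "H = {z\<in>vc_feas V E Z W. \<forall>i\<in>V. half_integral (z i)}"
  define cost where "cost z = (\<Sum>i\<in>V. z i)" for z :: "'a \<Rightarrow> real"
  have "cost ` H \<subseteq> cost ` (V \<rightarrow>\<^sub>E {0, 1/2, 1})"
  proof
    fix t assume "t \<in> cost ` H"
    then obtain z where "z \<in> H" "t = cost (restrict z V)" unfolding cost_def by auto
    moreover have "restrict z V \<in> V \<rightarrow>\<^sub>E {0, 1/2, 1}"
      using \<open>z \<in> H\<close> unfolding H_def half_integral_def by auto
    ultimately show "t \<in> cost ` (V \<rightarrow>\<^sub>E {0, 1/2, 1})" by blast
  qed
  moreover have "finite (cost ` (V \<rightarrow>\<^sub>E {0, 1/2, 1}))" using fin by (simp add: finite_PiE)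
  ultimately have "finite (cost ` H)" by (rule finite_subset)
  have "H \<noteq> {}"
    using feas vc_feas_round_half_integral[OF fin E] unfolding H_def by blast
  with \<open>finite (cost ` H)\<close> have "Min (cost ` H) \<in> cost ` H" by simp
  then obtain y where y: "y \<in> H" "cost y = Min (cost ` H)" by (metis imageE)
  have "cost y \<le> cost z" if z: "z \<in> vc_feas V E Z W" for z
  proof -
    obtain z' where "z' \<in> H" "cost z' \<le> cost z"
      using vc_feas_round_half_integral[OF fin E z] unfolding H_def cost_def by blast
    moreover have "Min (cost ` H) \<le> cost z'" using \<open>finite (cost ` H)\<close> \<open>z' \<in> H\<close> by simp
    ultimately show ?thesis using y(2) by linarith
  qed
  with y(1) show ?thesis unfolding vc_opt_iff H_def cost_def by auto
qed

lemma vc_opt_round_half_integral: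
  assumes fin: "finite V" and E: "E \<subseteq> V \<times> V" and x: "vc_opt V E Z W x"
  shows "\<exists>x'. vc_opt V E Z W x' \<and> (\<forall>i\<in>V. half_integral (x' i))
    \<and> (\<forall>i\<in>V. half_integral (x i) \<longrightarrow> x' i = x i)"
proof -
  from x have "x \<in> vc_feas V E Z W" unfolding vc_opt_iff by blast
  from vc_feas_round_half_integral[OF fin E this] obtain x' where
    x': "x' \<in> vc_feas V E Z W" "\<forall>i\<in>V. half_integral (x' i)" "(\<Sum>i\<in>V. x' i) \<le> (\<Sum>i\<in>V. x i)"
      "\<forall>i\<in>V. half_integral (x i) \<longrightarrow> x' i = x i"
    by blast
  with x have "vc_opt V E Z W x'" unfolding vc_opt_iff by force
  with x' show ?thesis by blast
qed

subsection \<open>Splitting the sum of two half-integral points\<close>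

text \<open>
  Applied to the average of two half-integral values, i.e. to a multiple of \<open>1/4\<close>:
  \<open>round_inward\<close> rounds \<open>1/4\<close> and \<open>3/4\<close> to \<open>1/2\<close>, \<open>round_outward\<close> to \<open>0\<close> and \<open>1\<close>.
\<close>

definition round_inward :: "real \<Rightarrow> real" where
  "round_inward p = (if p = 0 \<or> p = 1 then p else 1/2)"

definition round_outward :: "real \<Rightarrow> real" where
  "round_outward p = (if p < 1/2 then 0 else if p = 1/2 then 1/2 else 1)"

lemma round_inward_bounds: "0 \<le> round_inward p" "round_inward p \<le> 1"
  unfolding round_inward_def by auto

lemma round_outward_bounds: "0 \<le> round_outward p" "round_outward p \<le> 1"
  unfolding round_outward_def by auto

lemma round_inward_add_round_outward:
  "half_integral a \<Longrightarrow> half_integral b \<Longrightarrow>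
    round_inward ((a + b) / 2) + round_outward ((a + b) / 2) = a + b"
  unfolding half_integral_def round_inward_def round_outward_def by auto

lemma round_inward_cover:
  "half_integral a \<Longrightarrow> half_integral b \<Longrightarrow> half_integral c \<Longrightarrow> half_integral d \<Longrightarrow>
    1 \<le> a + c \<Longrightarrow> 1 \<le> b + d \<Longrightarrow> 1 \<le> round_inward ((a + b) / 2) + round_inward ((c + d) / 2)"
  unfolding half_integral_def round_inward_def by auto

lemma round_outward_cover:
  "half_integral a \<Longrightarrow> half_integral b \<Longrightarrow> half_integral c \<Longrightarrow> half_integral d \<Longrightarrow>
    1 \<le> a + c \<Longrightarrow> 1 \<le> b + d \<Longrightarrow> 1 \<le> round_outward ((a + b) / 2) + round_outward ((c + d) / 2)"
  unfolding half_integral_def round_outward_def by auto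

lemma vc_feas_round_inward:
  assumes E: "E \<subseteq> V \<times> V" and x: "x \<in> vc_feas V E Z W" and y: "y \<in> vc_feas V E Z W"
    and hx: "\<forall>i\<in>V. half_integral (x i)" and hy: "\<forall>i\<in>V. half_integral (y i)"
  shows "(\<lambda>i. round_inward ((x i + y i) / 2)) \<in> vc_feas V E Z W"
proof (rule vc_feasI)
  fix u w assume uw: "(u, w) \<in> E"
  with E have "u \<in> V" "w \<in> V" by auto
  with uw show "1 \<le> round_inward ((x u + y u) / 2) + round_inward ((x w + y w) / 2)"
    using hx hy vc_feasD(3)[OF x] vc_feasD(3)[OF y] by (intro round_inward_cover) auto
qed (use round_inward_bounds vc_feasD(4,5)[OF x] vc_feasD(4,5)[OF y] in \<open>auto simp: round_inward_def\<close>)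

lemma vc_feas_round_outward:
  assumes E: "E \<subseteq> V \<times> V" and x: "x \<in> vc_feas V E {} {}" and y: "y \<in> vc_feas V E Z W"
    and hx: "\<forall>i\<in>V. half_integral (x i)" and hy: "\<forall>i\<in>V. half_integral (y i)"
    and xZ: "x ` Z \<subseteq> {0, 1/2}" and xW: "x ` W \<subseteq> {1/2, 1}"
  shows "(\<lambda>i. round_outward ((x i + y i) / 2)) \<in> vc_feas V E Z W"
proof (rule vc_feasI)
  fix u w assume uw: "(u, w) \<in> E"
  with E have "u \<in> V" "w \<in> V" by auto
  with uw show "1 \<le> round_outward ((x u + y u) / 2) + round_outward ((x w + y w) / 2)"
    using hx hy vc_feasD(3)[OF x] vc_feasD(3)[OF y] by (intro round_outward_cover) auto
next
  fix j assume "j \<in> Z"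
  then show "round_outward ((x j + y j) / 2) = 0"
    using xZ vc_feasD(4)[OF y] unfolding round_outward_def by auto
next
  fix j assume "j \<in> W"
  then show "round_outward ((x j + y j) / 2) = 1"
    using xW vc_feasD(5)[OF y] unfolding round_outward_def by auto
qed (use round_outward_bounds in auto)

lemma vc_opt_round_outward:
  assumes E: "E \<subseteq> V \<times> V" and x: "vc_opt V E Z W x" and y: "vc_opt V E Z' W' y"
    and hx: "\<forall>i\<in>V. half_integral (x i)" and hy: "\<forall>i\<in>V. half_integral (y i)"
    and "Z \<subseteq> Z'" "W \<subseteq> W'" and xZ: "x ` Z' \<subseteq> {0, 1/2}" and xW: "x ` W' \<subseteq> {1/2, 1}"
  shows "vc_opt V E Z' W' (\<lambda>i. round_outward ((x i + y i) / 2))"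
proof -
  define r where "r i = round_inward ((x i + y i) / 2)" for i
  define s where "s i = round_outward ((x i + y i) / 2)" for i
  have xf: "x \<in> vc_feas V E Z W" and yf: "y \<in> vc_feas V E Z' W'"
    using x y unfolding vc_opt_iff by blast+
  have "y \<in> vc_feas V E Z W" using yf vc_feas_antimono \<open>Z \<subseteq> Z'\<close> \<open>W \<subseteq> W'\<close> by blast
  then have r: "r \<in> vc_feas V E Z W"
    unfolding r_def using vc_feas_round_inward[OF E xf _ hx hy] by blast
  have "x \<in> vc_feas V E {} {}" using xf vc_feas_antimono by blast
  then have s: "s \<in> vc_feas V E Z' W'"
    unfolding s_def using vc_feas_round_outward[OF E _ yf hx hy xZ xW] by blast
  have "(\<Sum>i\<in>V. r i) + (\<Sum>i\<in>V. s i) = (\<Sum>i\<in>V. x i + y i)"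
    unfolding sum.distrib[symmetric] r_def s_def
    using hx hy round_inward_add_round_outward by (intro sum.cong) auto
  moreover have "(\<Sum>i\<in>V. x i) \<le> (\<Sum>i\<in>V. r i)" using x r unfolding vc_opt_iff by blast
  ultimately have "(\<Sum>i\<in>V. s i) \<le> (\<Sum>i\<in>V. y i)" by (simp add: sum.distrib)
  with y s show ?thesis unfolding vc_opt_iff s_def by force
qed

subsection \<open>Branching on a variable outside \<open>I(\<I>, N)\<close>\<close>

lemma vc_I_intro: "j \<in> V \<Longrightarrow> vc_opt V E Z W x \<Longrightarrow> x j \<in> {0, 1} \<Longrightarrow> j \<in> vc_I V E Z W"
  unfolding vc_I_def by blast

lemma vc_I_subset_child:
  assumes fin: "finite V" and E: "E \<subseteq> V \<times> V" and v: "v \<in> V" "v \<notin> vc_I V E Z W"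
    and child: "Z \<subseteq> Z'" "W \<subseteq> W'" "Z' \<subseteq> insert v Z" "W' \<subseteq> insert v W"
    and feas: "vc_feas V E Z' W' \<noteq> {}"
  shows "vc_I V E Z W \<subseteq> vc_I V E Z' W'"
proof
  fix j assume "j \<in> vc_I V E Z W"
  then obtain x where j: "j \<in> V" and x: "vc_opt V E Z W x" and xj: "x j = 0 \<or> x j = 1"
    unfolding vc_I_def by blast
  obtain x' where x': "vc_opt V E Z W x'" "\<forall>i\<in>V. half_integral (x' i)"
    and keep: "\<forall>i\<in>V. half_integral (x i) \<longrightarrow> x' i = x i"
    using vc_opt_round_half_integral[OF fin E x] by blast
  have x'j: "x' j = x j" using keep j xj unfolding half_integral_def by auto
  have "\<not> (x' v = 0 \<or> x' v = 1)" using vc_I_intro[OF v(1) x'(1)] v(2) by auto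
  then have x'v: "x' v = 1/2" using x'(2) v(1) unfolding half_integral_def by auto
  have "x' \<in> vc_feas V E Z W" using x'(1) unfolding vc_opt_iff by blast
  then have x'Z: "x' ` Z' \<subseteq> {0, 1/2}" and x'W: "x' ` W' \<subseteq> {1/2, 1}"
    using x'v child(3,4) vc_feasD(4,5) by fastforce+
  obtain y where y: "vc_opt V E Z' W' y" "\<forall>i\<in>V. half_integral (y i)"
    using vc_opt_half_integral_exists[OF fin E feas] by blast
  show "j \<in> vc_I V E Z' W'"
  proof (cases "y j = 0 \<or> y j = 1")
    case True
    with vc_I_intro[OF j y(1)] show ?thesis by simp
  next
    case False
    with y(2) j have "y j = 1/2" unfolding half_integral_def by auto
    with xj x'j have "round_outward ((x' j + y j) / 2) \<in> {0, 1}"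
      unfolding round_outward_def by auto
    with vc_I_intro[OF j vc_opt_round_outward[OF E x'(1) y(1) x'(2) y(2) child(1,2) x'Z x'W]]
    show ?thesis by simp
  qed
qed

lemma fixed_in_vc_I:
  assumes "finite V" "E \<subseteq> V \<times> V" "v \<in> V" "v \<in> Z \<union> W" "vc_feas V E Z W \<noteq> {}"
  shows "v \<in> vc_I V E Z W"
proof -
  obtain y where y: "vc_opt V E Z W y" using vc_opt_half_integral_exists[OF assms(1,2,5)] by blast
  then have "y \<in> vc_feas V E Z W" unfolding vc_opt_iff by blast
  with assms(4) have "y v = 0 \<or> y v = 1" using vc_feasD(4,5) by (metis UnE)
  with vc_I_intro[OF assms(3) y] show ?thesis by simp
qed

lemma vc_feas_child_zero:
  assumes irrefl: "\<forall>(a, b)\<in>E. a \<noteq> b" and x: "x \<in> vc_feas V E Z W" and "x v < 1"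
  shows "(\<lambda>i. if i = v \<or> x i = 0 then 0 else 1) \<in> vc_feas V E (insert v Z) W"
proof (rule vc_feasI)
  show "1 \<le> (if a = v \<or> x a = 0 then 0 else 1) + (if b = v \<or> x b = 0 then 0 else (1::real))"
    if "(a, b) \<in> E" for a b
    using that irrefl vc_feasD(3)[OF x that] \<open>x v < 1\<close> by auto
qed (use vc_feasD[OF x] \<open>x v < 1\<close> in auto)

lemma vc_feas_child_one:
  assumes E: "E \<subseteq> V \<times> V" and x: "x \<in> vc_feas V E Z W" and "0 < x v"
  shows "x(v := 1) \<in> vc_feas V E Z (insert v W)"
proof (rule vc_feasI)
  show "1 \<le> (x(v := 1)) a + (x(v := 1)) b" if "(a, b) \<in> E" for a b
    using that E vc_feasD(1,2,3)[OF x, of a] vc_feasD(1,2,3)[OF x, of b] by auto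
qed (use x \<open>0 < x v\<close> vc_feasD[OF x] in auto)

theorem theorem2p3:
  fixes V :: "'a set" and E :: "('a \<times> 'a) set"
    and Z W Z' W' :: "'a set" and xh :: "'a \<Rightarrow> real" and v :: 'a
  assumes "finite V"
    and "E \<subseteq> V \<times> V"
    and "\<forall>(a, b)\<in>E. a \<noteq> b"
    and "sb_node V E (Z, W)"
    and "sb_branch V E Z W xh v"
    and "(Z', W') = (insert v Z, W) \<or> (Z', W') = (Z, insert v W)"
    and "v \<notin> vc_I V E Z W"
  shows "vc_I V E Z W \<subset> vc_I V E Z' W'"
proof -
  from assms(5) have xh: "xh \<in> vc_feas V E Z W" and v: "v \<in> V" "0 < xh v" "xh v < 1"
    unfolding sb_branch_def vc_opt_def by auto
  have child: "Z' = insert v Z \<and> W' = W \<or> Z' = Z \<and> W' = insert v W" using assms(6) by simp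
  then have feas: "vc_feas V E Z' W' \<noteq> {}"
    using vc_feas_child_zero[OF assms(3) xh v(3)] vc_feas_child_one[OF assms(2) xh v(2)] by blast
  have "vc_I V E Z W \<subseteq> vc_I V E Z' W'"
    using child by (intro vc_I_subset_child[OF assms(1,2) v(1) assms(7) _ _ _ _ feas]) auto
  moreover have "v \<in> vc_I V E Z' W'"
    using child by (intro fixed_in_vc_I[OF assms(1,2) v(1) _ feas]) auto
  ultimately show ?thesis using assms(7) by blast
qed

end
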